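(* Let $(\phi,\psi)$ be a $q\times q$ Nevanlinna pair. Then there exists a discrete subset $\mathcal D$ of $\Pi_+$ such that $\phi$ and $\psi$ are holomorphic in $\Pi_+\setminus\mathcal D$ and, for all $w,z\in\Pi_+\setminus\mathcal D$, $\mathcal R(\phi(w))=\mathcal R(\phi(z))$, $\mathcal R(\psi(w))=\mathcal R(\psi(z))$, $\psi(w)\mathcal N(\phi(w))=\psi(z)\mathcal N(\phi(z))$, and $\phi(w)\mathcal N(\psi(w))=\phi(z)\mathcal N(\psi(z))$.
   Context: $\Pi_+:=\{z:\operatorname{Im}z>0\}$; $J_q:=\begin{pmatrix}0&-iI_q\\ iI_q&0\end{pmatrix}$; $\mathcal R$, $\mathcal N$ denote column space and null space. A pair $(\phi,\psi)$ of $q\times q$ matrix-valued functions meromorphic in $\Pi_+$ is a $q\times q$ Nevanlinna pair if there is a discrete subset $\mathcal D$ of $\Pi_+$ such that $\phi,\psi$ are holomorphic in $\Pi_+\setminus\mathcal D$, $\operatorname{rank}\begin{pmatrix}\phi(w)\\\psi(w)\end{pmatrix}=q$ and $\begin{pmatrix}\phi(w)\\\psi(w)\end{pmatrix}^*(-J_q)\begin{pmatrix}\phi(w)\\\psi(w)\end{pmatrix}$ is positive semidefinite for all $w\in\Pi_+\setminus\mathcal D$. *)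

theory Defs
  imports "HOL-Complex_Analysis.Complex_Analysis"
begin

definition upper_half_plane :: "complex set" where
  "upper_half_plane = {z. Im z > 0}"

definition discrete_in :: "complex set \<Rightarrow> complex set \<Rightarrow> bool" where
  "discrete_in D S \<longleftrightarrow> D \<subseteq> S \<and> D sparse_in S"

definition mat_meromorphic_on :: "(complex \<Rightarrow> complex^'q::finite^'q) \<Rightarrow> complex set \<Rightarrow> bool" where
  "mat_meromorphic_on F S \<longleftrightarrow> (\<forall>i j. (\<lambda>z. F z $ i $ j) meromorphic_on S)"

definition mat_holomorphic_on :: "(complex \<Rightarrow> complex^'q::finite^'q) \<Rightarrow> complex set \<Rightarrow> bool" where
  "mat_holomorphic_on F S \<longleftrightarrow> (\<forall>i j. (\<lambda>z. F z $ i $ j) holomorphic_on S)"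

definition adjoint_mat :: "complex^'n::finite^'m::finite \<Rightarrow> complex^'m^'n" where
  "adjoint_mat A = (\<chi> i j. cnj (A $ j $ i))"

definition psd_mat :: "complex^'n::finite^'n \<Rightarrow> bool" where
  "psd_mat M \<longleftrightarrow> (\<forall>v. (\<Sum>i\<in>UNIV. cnj (v $ i) * (M *v v) $ i) \<in> \<real> \<and>
                        Re (\<Sum>i\<in>UNIV. cnj (v $ i) * (M *v v) $ i) \<ge> 0)"

definition stack_mat :: "complex^'q::finite^'q \<Rightarrow> complex^'q::finite^'q \<Rightarrow> complex^'q^('q + 'q)" where
  "stack_mat A B = (\<chi> r. case r of Inl i \<Rightarrow> A $ i | Inr i \<Rightarrow> B $ i)"

text \<open>J_q = [[0, -i I_q], [i I_q, 0]] indexed by 'q + 'q.\<close>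
definition J_mat :: "complex^('q::finite + 'q)^('q + 'q)" where
  "J_mat = (\<chi> r s. case (r, s) of
       (Inl i, Inr j) \<Rightarrow> (if i = j then - \<i> else 0)
     | (Inr i, Inl j) \<Rightarrow> (if i = j then \<i> else 0)
     | _ \<Rightarrow> 0)"

definition nevanlinna_pair :: "(complex \<Rightarrow> complex^'q::finite^'q) \<Rightarrow> (complex \<Rightarrow> complex^'q::finite^'q) \<Rightarrow> bool" where
  "nevanlinna_pair \<phi> \<psi> \<longleftrightarrow>
     mat_meromorphic_on \<phi> upper_half_plane \<and> mat_meromorphic_on \<psi> upper_half_plane \<and>
     (\<exists>D. discrete_in D upper_half_plane \<and>
          mat_holomorphic_on \<phi> (upper_half_plane - D) \<and>
          mat_holomorphic_on \<psi> (upper_half_plane - D) \<and>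
          (\<forall>w \<in> upper_half_plane - D.
             rank (stack_mat (\<phi> w) (\<psi> w)) = CARD('q) \<and>
             psd_mat (adjoint_mat (stack_mat (\<phi> w) (\<psi> w)) ** (- J_mat) ** stack_mat (\<phi> w) (\<psi> w))))"

definition col_space :: "complex^'n::finite^'m::finite \<Rightarrow> (complex^'m) set" where
  "col_space A = range (\<lambda>x. A *v x)"

definition null_space :: "complex^'n::finite^'m::finite \<Rightarrow> (complex^'n) set" where
  "null_space A = {x. A *v x = 0}"

end

theory Submission
  imports Defs
begin

(*
  At a point w, write A = phi w and B = psi w. The Nevanlinna condition says that (A; B) is
  injective and Im <Ax, Bx> <= 0, so |Ax - iBx| <= |Ax + iBx|. Hence A + iB is invertible and the
  Cayley transform K = (A - iB)(A + iB)^-1 is a contraction whose fixed vectors are exactly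
  A N(B). If K u = u at one point of a connected domain, the holomorphic function <u, K(z) u> has
  maximal modulus |u|^2 there, so it is constant, whence |K(z) u - u|^2 = |K(z) u|^2 - |u|^2 <= 0.
  Thus phi N(psi), and likewise psi N(phi) (apply this to (psi, -phi)), are constant off the
  discrete set. The column spaces follow, since R(A) is the orthogonal complement of B N(A).
*)

no_notation fps_nth (infixl \<open>$\<close> 75)

definition cinner :: "complex^'n::finite \<Rightarrow> complex^'n \<Rightarrow> complex" where
  "cinner a b = (\<Sum>i\<in>UNIV. cnj (a $ i) * b $ i)"

lemma cinner_add_right: "cinner c (a + b) = cinner c a + cinner c b"
  and cinner_scale_left: "cinner (k *s a) c = cnj k * cinner a c"
  and cinner_scale_right: "cinner c (k *s a) = k * cinner c a"
  and cinner_minus_right: "cinner c (- a) = - cinner c a"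
  by (simp_all add: cinner_def sum.distrib sum_distrib_left sum_negf ring_distribs
      mult.assoc mult.left_commute)

lemma cinner_commute: "cinner b a = cnj (cinner a b)"
  by (simp add: cinner_def mult.commute)

lemma Re_cinner: "Re (cinner a b) = inner a b"
  by (simp add: cinner_def inner_vec_def inner_complex_def Re_sum)

lemma cinner_self: "cinner a a = of_real ((norm a)\<^sup>2)"
proof -
  have "Im (cinner a a) = 0"
    by (simp add: cinner_def Im_sum)
  then show ?thesis
    by (simp add: complex_eq_iff Re_cinner power2_norm_eq_inner)
qed

lemma norm_cinner_le: "cmod (cinner u v) \<le> norm u * norm v"
proof -
  have "cmod (cinner u v) \<le> (\<Sum>i\<in>UNIV. \<bar>cmod (u $ i)\<bar> * \<bar>cmod (v $ i)\<bar>)"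
    unfolding cinner_def by (rule order_trans[OF norm_sum]) (simp add: norm_mult)
  also have "\<dots> \<le> norm u * norm v"
    unfolding norm_vec_def by (rule L2_set_mult_ineq)
  finally show ?thesis .
qed

lemma cinner_matrix_vector_mult:
  fixes S :: "complex^'n::finite^'m::finite"
  shows "cinner v (adjoint_mat S *v y) = cinner (S *v v) y"
  by (simp add: cinner_def adjoint_mat_def matrix_vector_mult_def sum_distrib_left
      sum_distrib_right sum.swap[of _ "UNIV::'m set"] mult_ac)

lemma norm_diff_i_scale_le:
  assumes "Im (cinner a b) \<le> 0"
  shows "norm (a - \<i> *s b) \<le> norm (a + \<i> *s b)"
proof -
  have "inner a (\<i> *s b) = - Im (cinner a b)"
    by (simp add: Re_cinner[symmetric] cinner_scale_right)
  then have "(norm (a + \<i> *s b))\<^sup>2 - (norm (a - \<i> *s b))\<^sup>2 = - 4 * Im (cinner a b)"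
    using dot_norm[of a "\<i> *s b"] dot_norm_neg[of a "\<i> *s b"] by argo
  then have "(norm (a - \<i> *s b))\<^sup>2 \<le> (norm (a + \<i> *s b))\<^sup>2"
    using assms by argo
  then show ?thesis
    by (rule power2_le_imp_le) simp
qed

lemma vec_maximum_modulus_principle:
  fixes w :: "complex \<Rightarrow> complex^'n::finite"
  assumes S: "open S" "connected S"
    and hol: "\<And>k. (\<lambda>z. w z $ k) holomorphic_on S"
    and le: "\<And>z. z \<in> S \<Longrightarrow> norm (w z) \<le> norm u"
    and z0: "z0 \<in> S" "w z0 = u" and "z \<in> S"
  shows "w z = u"
proof -
  define g where "g z = cinner u (w z)" for z
  have "g holomorphic_on S"
    unfolding g_def cinner_def by (intro holomorphic_intros hol)
  moreover have "norm (g z') \<le> norm (g z0)" if "z' \<in> S" for z'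
  proof -
    have "norm (g z') \<le> norm u * norm (w z')"
      unfolding g_def by (rule norm_cinner_le)
    also have "\<dots> \<le> norm u * norm u"
      using le[OF that] by (simp add: mult_left_mono)
    finally show ?thesis
      using z0 by (simp add: g_def cinner_self norm_mult power2_eq_square)
  qed
  ultimately have "g constant_on S"
    using maximum_modulus_principle[OF _ S S(1) order_refl z0(1)] by blast
  then have uw: "cinner u (w z) = cinner u u"
    using z0 \<open>z \<in> S\<close> by (auto simp: constant_on_def g_def)
  then have "cinner (w z) u = cinner u u"
    by (subst cinner_commute) (simp add: cinner_self)
  then have "inner (w z) u = (norm u)\<^sup>2"
    by (simp add: Re_cinner[symmetric] cinner_self)
  then have "(norm (w z - u))\<^sup>2 = (norm (w z))\<^sup>2 - (norm u)\<^sup>2"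
    using dot_norm_neg[of "w z" u] by argo
  also have "\<dots> \<le> 0"
    using le[OF \<open>z \<in> S\<close>] by (simp add: power_mono)
  finally show ?thesis by simp
qed

lemma mat_vector_mult: "mat c *v x = c *s (x :: 'a::semiring_1^'n)"
  by (simp add: vec_eq_iff matrix_vector_mult_def mat_def if_distrib if_distribR cong del: if_weak_cong)

lemma matrix_vector_mult_neg: "(- A :: 'a::ring_1^'n^'m) *v x = - (A *v x)"
  by (simp add: vec_eq_iff matrix_vector_mult_def sum_negf)

lemma matrix_vector_mult_scale: "(A :: 'a::comm_semiring_1^'n^'m) *v (c *s x) = c *s (A *v x)"
  by (simp add: vec_eq_iff matrix_vector_mult_def sum_distrib_left mult_ac)

lemma matrix_vector_mult_add_mat_mult: "(A + mat c ** B) *v x = A *v x + c *s (B *v x)"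
  by (simp add: matrix_vector_mult_add_rdistrib matrix_vector_mul_assoc[symmetric] mat_vector_mult)

lemma inj_matrix_vector_mult_if_full_rank:
  fixes A :: "complex^'n::finite^'m::finite"
  assumes "rank A = CARD('n)"
  shows "inj ((*v) A)"
proof -
  have "vec.span (rows A) = UNIV"
    using assms vec.dim_eq_full[of "rows A"] unfolding row_rank_def_gen
    by (simp add: vec_dim_card vec.dimension_def card_cart_basis)
  then show ?thesis
    using matrix_left_invertible_span_rows_gen matrix_left_invertible_injective by blast
qed

lemma holomorphic_solution_of_linear_system:
  fixes M :: "complex \<Rightarrow> complex^'n::finite^'n"
  assumes hol: "mat_holomorphic_on M S" and det: "\<And>z. z \<in> S \<Longrightarrow> det (M z) \<noteq> 0"
  obtains x where "\<And>k. (\<lambda>z. x z $ k) holomorphic_on S" "\<And>z. z \<in> S \<Longrightarrow> M z *v x z = b"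
proof
  let ?x = "\<lambda>z. \<chi> k. det (\<chi> i j. if j = k then b $ i else M z $ i $ j) / det (M z)"
  have hol_ij: "(\<lambda>z. M z $ i $ j) holomorphic_on S" for i j
    using hol by (simp add: mat_holomorphic_on_def)
  have "(\<lambda>z. if j = k then b $ i else M z $ i $ j) holomorphic_on S" for i j k
    by (cases "j = k") (simp_all add: hol_ij)
  then have "(\<lambda>z. det (\<chi> i j. if j = k then b $ i else M z $ i $ j)) holomorphic_on S" for k
    unfolding det_def by (intro holomorphic_intros) simp
  moreover have "(\<lambda>z. det (M z)) holomorphic_on S"
    unfolding det_def by (intro holomorphic_intros hol_ij)
  ultimately show "(\<lambda>z. ?x z $ k) holomorphic_on S" for k
    by (simp add: holomorphic_on_divide det)
  show "M z *v ?x z = b" if "z \<in> S" for z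
    using cramer[OF det[OF that]] by blast
qed

lemma add_i_scale_eq_diff_i_scale:
  fixes a b c :: "complex^'n"
  assumes "a + \<i> *s b = c" "a - \<i> *s b = c"
  shows "a = c" "b = 0"
proof -
  have "a $ k = c $ k \<and> b $ k = 0" for k
  proof -
    have "a $ k + \<i> * b $ k = c $ k" "a $ k - \<i> * b $ k = c $ k"
      using assms by (metis vector_add_component vector_minus_component vector_smult_component)+
    then show ?thesis
      by (auto simp: complex_eq_iff)
  qed
  then show "a = c" "b = 0"
    by (simp_all add: vec_eq_iff)
qed

lemma inj_matrix_vector_mult_iff_det_nonzero:
  fixes A :: "'a::field^'n^'n"
  shows "inj ((*v) A) \<longleftrightarrow> det A \<noteq> 0"
  using det_nz_iff_inj_gen[OF matrix_vector_mul_linear_gen[of A]] by simp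

text \<open>The pointwise content of a Nevanlinna pair: the stacked matrix (A; B) has trivial kernel,
  and the form of its (-J)-Gram matrix, \<open>i<Ax,Bx> - i<Bx,Ax> = -2 Im <Ax,Bx>\<close>, is nonnegative.\<close>

definition nevanlinna_matrix_pair :: "complex^'q::finite^'q \<Rightarrow> complex^'q^'q \<Rightarrow> bool" where
  "nevanlinna_matrix_pair A B \<longleftrightarrow>
     (\<forall>x. A *v x = 0 \<and> B *v x = 0 \<longrightarrow> x = 0) \<and> (\<forall>x. Im (cinner (A *v x) (B *v x)) \<le> 0)"

lemma nevanlinna_matrix_pair_joint_kernel:
  "nevanlinna_matrix_pair A B \<Longrightarrow> A *v x = 0 \<Longrightarrow> B *v x = 0 \<Longrightarrow> x = 0"
  unfolding nevanlinna_matrix_pair_def by blast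

lemma nevanlinna_matrix_pair_Im_le:
  "nevanlinna_matrix_pair A B \<Longrightarrow> Im (cinner (A *v x) (B *v x)) \<le> 0"
  unfolding nevanlinna_matrix_pair_def by blast

lemma nevanlinna_matrix_pair_norm_le:
  "nevanlinna_matrix_pair A B \<Longrightarrow> norm (A *v x - \<i> *s (B *v x)) \<le> norm (A *v x + \<i> *s (B *v x))"
  by (rule norm_diff_i_scale_le[OF nevanlinna_matrix_pair_Im_le])

lemma nevanlinna_matrix_pair_swap:
  assumes "nevanlinna_matrix_pair A B"
  shows "nevanlinna_matrix_pair B (- A)"
proof -
  have "Im (cinner (B *v x) (- A *v x)) = Im (cinner (A *v x) (B *v x))" for x
    by (simp add: matrix_vector_mult_neg cinner_minus_right cinner_commute[of "B *v x" "A *v x"])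
  moreover have "x = 0" if "B *v x = 0" "- A *v x = 0" for x
    using that nevanlinna_matrix_pair_joint_kernel[OF assms] by (simp add: matrix_vector_mult_neg)
  ultimately show ?thesis
    using nevanlinna_matrix_pair_Im_le[OF assms] unfolding nevanlinna_matrix_pair_def by auto
qed

lemma nevanlinna_matrix_pair_det_nonzero:
  assumes "nevanlinna_matrix_pair A B"
  shows "det (A + mat \<i> ** B) \<noteq> 0"
  unfolding inj_matrix_vector_mult_iff_det_nonzero[symmetric]
proof (rule injI)
  fix x y assume "(A + mat \<i> ** B) *v x = (A + mat \<i> ** B) *v y"
  then have "(A + mat \<i> ** B) *v (x - y) = 0"
    by (simp add: matrix_vector_mult_diff_distrib)
  then have sum: "A *v (x - y) + \<i> *s (B *v (x - y)) = 0"
    by (simp only: matrix_vector_mult_add_mat_mult)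
  then have "A *v (x - y) - \<i> *s (B *v (x - y)) = 0"
    using nevanlinna_matrix_pair_norm_le[OF assms, of "x - y"] by simp
  with sum have "A *v (x - y) = 0" "B *v (x - y) = 0"
    by (rule add_i_scale_eq_diff_i_scale)+
  then have "x - y = 0"
    by (rule nevanlinna_matrix_pair_joint_kernel[OF assms])
  then show "x = y"
    by simp
qed

lemma mat_holomorphic_on_add_mat_mult:
  assumes "mat_holomorphic_on A S" "mat_holomorphic_on B S"
  shows "mat_holomorphic_on (\<lambda>z. A z + mat c ** B z) S"
  using assms unfolding mat_holomorphic_on_def matrix_matrix_mult_def
  by (auto intro!: holomorphic_intros)

lemma nevanlinna_matrix_pair_image_null_space_iff:
  assumes nev: "nevanlinna_matrix_pair A B" and x: "(A + mat \<i> ** B) *v x = u"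
  shows "u \<in> (\<lambda>x. A *v x) ` null_space B \<longleftrightarrow> A *v x - \<i> *s (B *v x) = u"
proof
  assume "u \<in> (\<lambda>x. A *v x) ` null_space B"
  then obtain x0 where x0: "B *v x0 = 0" "A *v x0 = u"
    by (auto simp: null_space_def)
  then have "(A + mat \<i> ** B) *v x0 = (A + mat \<i> ** B) *v x"
    using x by (simp add: matrix_vector_mult_add_mat_mult)
  then have "x0 = x"
    using nevanlinna_matrix_pair_det_nonzero[OF nev]
    by (simp add: inj_matrix_vector_mult_iff_det_nonzero[symmetric] inj_eq)
  then show "A *v x - \<i> *s (B *v x) = u"
    using x0 by simp
next
  assume "A *v x - \<i> *s (B *v x) = u"
  moreover have "A *v x + \<i> *s (B *v x) = u"
    using x by (simp add: matrix_vector_mult_add_mat_mult)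
  ultimately have "A *v x = u" "B *v x = 0"
    using add_i_scale_eq_diff_i_scale by blast+
  then show "u \<in> (\<lambda>x. A *v x) ` null_space B"
    by (auto simp: null_space_def)
qed

lemma image_null_space_subset:
  fixes \<phi> \<psi> :: "complex \<Rightarrow> complex^'q::finite^'q"
  assumes S: "open S" "connected S"
    and hol: "mat_holomorphic_on \<phi> S" "mat_holomorphic_on \<psi> S"
    and nev: "\<And>z. z \<in> S \<Longrightarrow> nevanlinna_matrix_pair (\<phi> z) (\<psi> z)"
    and z0: "z0 \<in> S" and z1: "z1 \<in> S"
  shows "(\<lambda>x. \<phi> z0 *v x) ` null_space (\<psi> z0) \<subseteq> (\<lambda>x. \<phi> z1 *v x) ` null_space (\<psi> z1)"
proof
  fix u assume u: "u \<in> (\<lambda>x. \<phi> z0 *v x) ` null_space (\<psi> z0)"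
  have "mat_holomorphic_on (\<lambda>z. \<phi> z + mat \<i> ** \<psi> z) S"
    by (rule mat_holomorphic_on_add_mat_mult[OF hol])
  then obtain x where hol_x: "\<And>k. (\<lambda>z. x z $ k) holomorphic_on S"
    and sol: "\<And>z. z \<in> S \<Longrightarrow> (\<phi> z + mat \<i> ** \<psi> z) *v x z = u"
    using holomorphic_solution_of_linear_system nevanlinna_matrix_pair_det_nonzero[OF nev] by blast
  define w where "w z = \<phi> z *v x z - \<i> *s (\<psi> z *v x z)" for z
  have w0: "w z0 = u"
    using u nevanlinna_matrix_pair_image_null_space_iff[OF nev[OF z0] sol[OF z0]] by (simp add: w_def)
  have le: "norm (w z) \<le> norm u" if "z \<in> S" for z
    using nevanlinna_matrix_pair_norm_le[OF nev[OF that], of "x z"] sol[OF that]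
    by (simp add: w_def matrix_vector_mult_add_mat_mult)
  have hol_w: "(\<lambda>z. w z $ k) holomorphic_on S" for k
    using hol hol_x unfolding w_def matrix_vector_mult_def mat_holomorphic_on_def
    by (auto intro!: holomorphic_intros)
  have "w z1 = u"
    by (rule vec_maximum_modulus_principle[OF S hol_w le z0 w0 z1])
  then show "u \<in> (\<lambda>x. \<phi> z1 *v x) ` null_space (\<psi> z1)"
    using nevanlinna_matrix_pair_image_null_space_iff[OF nev[OF z1] sol[OF z1]] by (simp add: w_def)
qed

lemma image_null_space_eq:
  fixes \<phi> \<psi> :: "complex \<Rightarrow> complex^'q::finite^'q"
  assumes "open S" "connected S" "mat_holomorphic_on \<phi> S" "mat_holomorphic_on \<psi> S"
    and "\<And>z. z \<in> S \<Longrightarrow> nevanlinna_matrix_pair (\<phi> z) (\<psi> z)"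
    and "w \<in> S" "z \<in> S"
  shows "(\<lambda>x. \<phi> w *v x) ` null_space (\<psi> w) = (\<lambda>x. \<phi> z *v x) ` null_space (\<psi> z)"
  using image_null_space_subset[OF assms(1-5)] assms(6,7) by (meson subset_antisym)

lemma nevanlinna_matrix_pair_image_null_space_orthogonal:
  assumes nev: "nevanlinna_matrix_pair A B" and x0: "A *v x0 = 0"
  shows "orthogonal (A *v v) (B *v x0)"
proof -
  txt \<open>Perturb \<open>x0\<close> along \<open>-i s \<alpha> v\<close>: the term of order \<open>s\<close> in
    \<open>Im <A x, B x>\<close> is \<open>s |\<alpha>|\<^sup>2\<close>, which must therefore vanish.\<close>
  define \<alpha> where "\<alpha> = cinner (A *v v) (B *v x0)"
  define \<beta> where "\<beta> = cinner (A *v v) (B *v v)"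
  define n where "n = (cmod \<alpha>)\<^sup>2"
  define s where "s = 1 / (1 + \<bar>Im \<beta>\<bar>)"
  define t where "t = - \<i> * of_real s * \<alpha>"
  have s_pos: "s > 0"
    by (simp add: s_def add_pos_nonneg)
  have "s * \<bar>Im \<beta>\<bar> < 1"
    by (simp add: s_def)
  then have factor_pos: "s * (1 + s * Im \<beta>) > 0"
    using s_pos abs_ge_minus_self[of "Im \<beta>"] mult_left_mono[of "- Im \<beta>" "\<bar>Im \<beta>\<bar>" s]
    by (intro mult_pos_pos) argo+
  have "cnj \<alpha> * \<alpha> = of_real n"
    unfolding n_def by (simp only: complex_norm_square mult.commute)
  then have "cnj t * \<alpha> = \<i> * of_real (s * n)" "t * cnj t = of_real (s\<^sup>2 * n)"
    by (simp_all add: t_def power2_eq_square mult_ac)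
  moreover have "A *v (x0 + t *s v) = t *s (A *v v)"
    using x0 by (simp add: matrix_vector_right_distrib matrix_vector_mult_scale)
  moreover have "B *v (x0 + t *s v) = B *v x0 + t *s (B *v v)"
    by (simp add: matrix_vector_right_distrib matrix_vector_mult_scale)
  ultimately have "cinner (A *v (x0 + t *s v)) (B *v (x0 + t *s v)) =
      \<i> * of_real (s * n) + of_real (s\<^sup>2 * n) * \<beta>"
    by (simp add: cinner_add_right cinner_scale_left cinner_scale_right \<alpha>_def \<beta>_def
        distrib_left mult.assoc[symmetric])
  then have "n * (s * (1 + s * Im \<beta>)) \<le> 0"
    using nevanlinna_matrix_pair_Im_le[OF nev, of "x0 + t *s v"]
    by (simp add: power2_eq_square algebra_simps)
  then have "n \<le> 0"
    using mult_le_cancel_right_pos[OF factor_pos, of n 0] by simp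
  then have "\<alpha> = 0"
    by (simp add: n_def)
  then show ?thesis
    by (simp add: orthogonal_def Re_cinner[symmetric] \<alpha>_def)
qed

lemma nevanlinna_matrix_pair_orthogonal_imp_image_null_space:
  assumes nev: "nevanlinna_matrix_pair A B" and y: "\<And>v. orthogonal (A *v v) y"
  shows "y \<in> (\<lambda>x. B *v x) ` null_space A"
proof -
  txt \<open>Solve \<open>(A + iB) x = iy\<close>; then \<open>Ax - iBx = 2Ax - iy\<close> with \<open>Ax \<bottom> iy\<close>, and the
    contraction inequality forces \<open>Ax = 0\<close>.\<close>
  obtain x where "(A + mat \<i> ** B) *v x = \<i> *s y"
    using cramer[OF nevanlinna_matrix_pair_det_nonzero[OF nev]] by blast
  then have sum: "A *v x + \<i> *s (B *v x) = \<i> *s y"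
    by (simp add: matrix_vector_mult_add_mat_mult)
  have "Re (cinner (A *v (\<i> *s x)) y) = 0"
    using y by (simp add: orthogonal_def Re_cinner)
  then have "orthogonal (2 *s (A *v x)) (- (\<i> *s y))"
    by (simp add: orthogonal_def matrix_vector_mult_scale Re_cinner[symmetric] cinner_add_right
        cinner_scale_left cinner_scale_right cinner_minus_right)
  moreover have "A *v x - \<i> *s (B *v x) = 2 *s (A *v x) - \<i> *s y"
    using sum by (simp add: vec_eq_iff algebra_simps)
  ultimately have "(norm (A *v x - \<i> *s (B *v x)))\<^sup>2 = (norm (2 *s (A *v x)))\<^sup>2 + (norm (\<i> *s y))\<^sup>2"
    using norm_add_Pythagorean by fastforce
  moreover have "(norm (A *v x - \<i> *s (B *v x)))\<^sup>2 \<le> (norm (\<i> *s y))\<^sup>2"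
    using nevanlinna_matrix_pair_norm_le[OF nev, of x] sum by (simp add: power_mono)
  ultimately have "(norm (2 *s (A *v x)))\<^sup>2 \<le> 0"
    by argo
  then have "A *v x = 0"
    by (simp add: vec_eq_iff)
  moreover have "B *v x = y"
    using sum calculation by (simp add: vec_eq_iff)
  ultimately show ?thesis
    by (auto simp: null_space_def)
qed

lemma nevanlinna_matrix_pair_col_space_eq:
  assumes "nevanlinna_matrix_pair A B"
  shows "col_space A = orthogonal_comp ((\<lambda>x. B *v x) ` null_space A)"
proof -
  have "(\<lambda>x. B *v x) ` null_space A = orthogonal_comp (col_space A)"
    using nevanlinna_matrix_pair_image_null_space_orthogonal[OF assms]
      nevanlinna_matrix_pair_orthogonal_imp_image_null_space[OF assms]
    by (auto simp: col_space_def null_space_def orthogonal_comp_def)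
  moreover have "subspace (col_space A)"
    unfolding col_space_def by (simp add: linear_subspace_image)
  ultimately show ?thesis
    by (simp add: orthogonal_comp_self)
qed

lemma sum_UNIV_sum_type:
  "sum f (UNIV :: ('a::finite + 'b::finite) set) = (\<Sum>i\<in>UNIV. f (Inl i)) + (\<Sum>i\<in>UNIV. f (Inr i))"
  using sum.Plus[of "UNIV :: 'a set" "UNIV :: 'b set" f] by (simp add: comp_def)

lemma stack_mat_vector_mult:
  "(stack_mat A B *v v) $ Inl i = (A *v v) $ i"
  "(stack_mat A B *v v) $ Inr i = (B *v v) $ i"
  by (simp_all add: stack_mat_def matrix_vector_mult_def)

lemma neg_J_mat_vector_mult:
  fixes y :: "complex^('q::finite + 'q)"
  shows "(- J_mat *v y) $ Inl i = \<i> * y $ Inr i"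
    "(- J_mat *v y) $ Inr i = - \<i> * y $ Inl i"
proof -
  have if_mult: "(if P then c else 0) * a = (if P then c * a else 0)" for P and c a :: complex
    by simp
  show "(- J_mat *v y) $ Inl i = \<i> * y $ Inr i" "(- J_mat *v y) $ Inr i = - \<i> * y $ Inl i"
    by (simp_all add: J_mat_def matrix_vector_mult_def sum_UNIV_sum_type sum_negf if_mult)
qed

lemma cinner_J_form_stack:
  fixes A B :: "complex^'q::finite^'q"
  defines "S \<equiv> stack_mat A B"
  shows "cinner v ((adjoint_mat S ** - J_mat ** S) *v v) =
    \<i> * cinner (A *v v) (B *v v) - \<i> * cinner (B *v v) (A *v v)"
proof -
  have "cinner v ((adjoint_mat S ** - J_mat ** S) *v v) = cinner (S *v v) (- J_mat *v (S *v v))"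
    by (simp add: cinner_matrix_vector_mult matrix_vector_mul_assoc[symmetric])
  also have "\<dots> = \<i> * cinner (A *v v) (B *v v) - \<i> * cinner (B *v v) (A *v v)"
    by (simp add: S_def cinner_def sum_UNIV_sum_type stack_mat_vector_mult neg_J_mat_vector_mult
        sum_distrib_left sum_subtractf sum_negf mult_ac)
  finally show ?thesis .
qed

lemma nevanlinna_matrix_pair_stack:
  fixes A B :: "complex^'q::finite^'q"
  assumes rank: "rank (stack_mat A B) = CARD('q)"
    and psd: "psd_mat (adjoint_mat (stack_mat A B) ** - J_mat ** stack_mat A B)"
  shows "nevanlinna_matrix_pair A B"
  unfolding nevanlinna_matrix_pair_def
proof (intro conjI allI impI)
  fix x assume "A *v x = 0 \<and> B *v x = 0"
  then have "stack_mat A B *v x = 0"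
    by (simp add: vec_eq_iff split_sum_all stack_mat_vector_mult)
  then show "x = 0"
    using inj_matrix_vector_mult_if_full_rank[OF rank] by (metis injD matrix_vector_mult_0_right)
next
  fix x
  have "Re (cinner x ((adjoint_mat (stack_mat A B) ** - J_mat ** stack_mat A B) *v x)) \<ge> 0"
    using psd unfolding psd_mat_def cinner_def by blast
  then show "Im (cinner (A *v x) (B *v x)) \<le> 0"
    by (simp add: cinner_J_form_stack cinner_commute[of "B *v x"])
qed

lemma nevanlinna_family_subspaces_constant:
  fixes \<phi> \<psi> :: "complex \<Rightarrow> complex^'q::finite^'q"
  assumes S: "open S" "connected S"
    and hol: "mat_holomorphic_on \<phi> S" "mat_holomorphic_on \<psi> S"
    and nev: "\<And>z. z \<in> S \<Longrightarrow> nevanlinna_matrix_pair (\<phi> z) (\<psi> z)"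
  shows "\<forall>w \<in> S. \<forall>z \<in> S.
    col_space (\<phi> w) = col_space (\<phi> z) \<and> col_space (\<psi> w) = col_space (\<psi> z) \<and>
    (\<lambda>x. \<psi> w *v x) ` null_space (\<phi> w) = (\<lambda>x. \<psi> z *v x) ` null_space (\<phi> z) \<and>
    (\<lambda>x. \<phi> w *v x) ` null_space (\<psi> w) = (\<lambda>x. \<phi> z *v x) ` null_space (\<psi> z)"
proof (intro ballI)
  fix w z assume w: "w \<in> S" and z: "z \<in> S"
  have hol': "mat_holomorphic_on (\<lambda>z. - \<phi> z) S"
    using hol(1) by (simp add: mat_holomorphic_on_def holomorphic_on_minus)
  have nev': "nevanlinna_matrix_pair (\<psi> z) (- \<phi> z)" if "z \<in> S" for z
    by (rule nevanlinna_matrix_pair_swap[OF nev[OF that]])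
  have null_space_neg: "null_space (- A) = null_space A" for A :: "complex^'q^'q"
    by (simp add: null_space_def matrix_vector_mult_neg)
  have \<phi>N\<psi>: "(\<lambda>x. \<phi> w *v x) ` null_space (\<psi> w) = (\<lambda>x. \<phi> z *v x) ` null_space (\<psi> z)"
    by (rule image_null_space_eq[OF S hol nev w z])
  have \<psi>N\<phi>: "(\<lambda>x. \<psi> w *v x) ` null_space (\<phi> w) = (\<lambda>x. \<psi> z *v x) ` null_space (\<phi> z)"
    using image_null_space_eq[OF S hol(2) hol' nev' w z] by (simp add: null_space_neg)
  have "col_space (\<phi> a) = orthogonal_comp ((\<lambda>x. \<psi> a *v x) ` null_space (\<phi> a))" if "a \<in> S" for a
    by (rule nevanlinna_matrix_pair_col_space_eq[OF nev[OF that]])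
  then have col_\<phi>: "col_space (\<phi> w) = col_space (\<phi> z)"
    using w z \<psi>N\<phi> by metis
  have "col_space (\<psi> a) = orthogonal_comp (uminus ` (\<lambda>x. \<phi> a *v x) ` null_space (\<psi> a))"
    if "a \<in> S" for a
    using nevanlinna_matrix_pair_col_space_eq[OF nev'[OF that]] by (simp add: image_image matrix_vector_mult_neg)
  then have col_\<psi>: "col_space (\<psi> w) = col_space (\<psi> z)"
    using w z \<phi>N\<psi> by metis
  show "col_space (\<phi> w) = col_space (\<phi> z) \<and> col_space (\<psi> w) = col_space (\<psi> z) \<and>
    (\<lambda>x. \<psi> w *v x) ` null_space (\<phi> w) = (\<lambda>x. \<psi> z *v x) ` null_space (\<phi> z) \<and>
    (\<lambda>x. \<phi> w *v x) ` null_space (\<psi> w) = (\<lambda>x. \<phi> z *v x) ` null_space (\<psi> z)"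
    by (intro conjI col_\<phi> col_\<psi> \<psi>N\<phi> \<phi>N\<psi>)
qed

theorem proposition10p4:
  fixes \<phi> \<psi> :: "complex \<Rightarrow> complex^'q^'q"
  assumes "nevanlinna_pair \<phi> \<psi>"
  shows "\<exists>D. discrete_in D upper_half_plane \<and>
          mat_holomorphic_on \<phi> (upper_half_plane - D) \<and>
          mat_holomorphic_on \<psi> (upper_half_plane - D) \<and>
          (\<forall>w \<in> upper_half_plane - D. \<forall>z \<in> upper_half_plane - D.
             col_space (\<phi> w) = col_space (\<phi> z) \<and>
             col_space (\<psi> w) = col_space (\<psi> z) \<and>
             (\<lambda>x. \<psi> w *v x) ` null_space (\<phi> w) = (\<lambda>x. \<psi> z *v x) ` null_space (\<phi> z) \<and>
             (\<lambda>x. \<phi> w *v x) ` null_space (\<psi> w) = (\<lambda>x. \<phi> z *v x) ` null_space (\<psi> z))"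
proof -
  obtain D where D: "discrete_in D upper_half_plane"
    and hol: "mat_holomorphic_on \<phi> (upper_half_plane - D)" "mat_holomorphic_on \<psi> (upper_half_plane - D)"
    and pointwise: "\<forall>w \<in> upper_half_plane - D.
             rank (stack_mat (\<phi> w) (\<psi> w)) = CARD('q) \<and>
             psd_mat (adjoint_mat (stack_mat (\<phi> w) (\<psi> w)) ** (- J_mat) ** stack_mat (\<phi> w) (\<psi> w))"
    using assms unfolding nevanlinna_pair_def by blast
  have "open upper_half_plane" "connected upper_half_plane"
    unfolding upper_half_plane_def
    by (simp_all add: open_halfspace_Im_gt convex_halfspace_Im_gt convex_connected)
  moreover have "D sparse_in upper_half_plane"
    using D by (simp add: discrete_in_def)
  ultimately have S: "open (upper_half_plane - D)" "connected (upper_half_plane - D)"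
    by (simp_all add: open_diff_sparse_pts sparse_imp_connected)
  have "nevanlinna_matrix_pair (\<phi> w) (\<psi> w)" if "w \<in> upper_half_plane - D" for w
    using pointwise that by (simp add: nevanlinna_matrix_pair_stack)
  then show ?thesis
    by (intro exI[of _ D] conjI D hol nevanlinna_family_subspaces_constant[OF S hol])
qed

end
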